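(* Assume the setting described in the context, assume $(L-1)\mathfrak m\neq0$, let $\xi=(\xi_1,\dots,\xi_{\ell_L})\in\mathbb R^{\ell_L}$ satisfy $\xi_1=\mathfrak m^{-1}\int_{[a,b]^{\ell_0}}f_1(x)\,\mu(dx)$, for $i,j\in\mathbb N_0$, $k\in\mathbb N$ let $\alpha_{i,j,k}=i\ell_{k-1}+j+\sum_{h=1}^{k-1}\ell_h(\ell_{h-1}+1)$, and let $\theta=(\theta_1,\dots,\theta_{\mathfrak d})$, $\vartheta=(\vartheta_1,\dots,\vartheta_{\mathfrak d})\in\mathbb R^{\mathfrak d}$ satisfy for all $i\in\{1,\dots,\ell_L\}$ and all $j\in\{1,\dots,\mathfrak d\}\setminus\big(\bigcup_{k=1}^{\ell_L}\{\alpha_{\ell_{L-1},1,L-1},\alpha_{0,1,L},\alpha_{\ell_L,k,L}\}\big)$ that $\theta_{\alpha_{\ell_{L-1},1,L-1}}=\vartheta_{\alpha_{0,1,L}}=1$, $\theta_{\alpha_{\ell_L,i,L}}=\vartheta_{\alpha_{\ell_L,i,L}}=\xi_i$, and $\theta_{\alpha_{0,1,L}}=\vartheta_{\alpha_{\ell_{L-1},1,L-1}}=\theta_j=\vartheta_j=0$. Then $$\mathcal L_\infty\Big(\frac{\theta+\vartheta}2\Big)=\Big[\frac{\mathcal L_\infty(\theta)+\mathcal L_\infty(\vartheta)}2\Big]+\frac{\mathfrak m}{16}>\frac{\mathcal L_\infty(\theta)+\mathcal L_\infty(\vartheta)}2.$$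
   Context: Setting. Let $L,\mathfrak d\in\mathbb N=\{1,2,\dots\}$, $(\ell_k)_{k\in\mathbb N_0}\subseteq\mathbb N$, $a\in\mathbb R$, $b\in(a,\infty)$ with $\mathfrak d=\sum_{k=1}^L\ell_k(\ell_{k-1}+1)$; let $\mathbf d_k=\sum_{h=1}^k\ell_h(\ell_{h-1}+1)$ for $k\in\mathbb N_0$. For $\theta=(\theta_1,\dots,\theta_{\mathfrak d})\in\mathbb R^{\mathfrak d}$, $k\in\{1,\dots,L\}$, $i\in\{1,\dots,\ell_k\}$, $j\in\{1,\dots,\ell_{k-1}\}$ let $\mathfrak w^{k,\theta}_{i,j}=\theta_{(i-1)\ell_{k-1}+j+\mathbf d_{k-1}}$ and $\mathfrak b^{k,\theta}_i=\theta_{\ell_k\ell_{k-1}+i+\mathbf d_{k-1}}$, let $\mathfrak w^{k,\theta}=(\mathfrak w^{k,\theta}_{i,j})_{i,j}\in\mathbb R^{\ell_k\times\ell_{k-1}}$, $\mathfrak b^{k,\theta}=(\mathfrak b^{k,\theta}_1,\dots,\mathfrak b^{k,\theta}_{\ell_k})\in\mathbb R^{\ell_k}$, and $\mathcal A^\theta_k(x)=\mathfrak b^{k,\theta}+\mathfrak w^{k,\theta}x$. Let $\mathfrak M_\infty(x_1,\dots,x_n)=(\max\{x_1,0\},\dots,\max\{x_n,0\})$ and $\|\cdot\|$ the Euclidean norm. Define $\mathcal N^{k,\theta}_\infty\colon\mathbb R^{\ell_0}\to\mathbb R^{\ell_k}$, $k\in\{1,\dots,L\}$, by $\mathcal N^{1,\theta}_\infty=\mathcal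 A^\theta_1$ and $\mathcal N^{k+1,\theta}_\infty(x)=\mathcal A^\theta_{k+1}(\mathfrak M_\infty(\mathcal N^{k,\theta}_\infty(x)))$. Let $\mu$ be a measure on the Borel $\sigma$-algebra of $[a,b]^{\ell_0}$ with $\mathfrak m=\mu([a,b]^{\ell_0})\in\mathbb R$, let $f=(f_1,\dots,f_{\ell_L})\colon[a,b]^{\ell_0}\to\mathbb R^{\ell_L}$ be measurable, and let $\mathcal L_\infty\colon\mathbb R^{\mathfrak d}\to\mathbb R$, $\mathcal L_\infty(\theta)=\int_{[a,b]^{\ell_0}}\|\mathcal N^{L,\theta}_\infty(x)-f(x)\|^2\,\mu(dx)$ (these integrals are real numbers as part of the setting). *)

theory Defs
  imports "HOL-Analysis.Analysis"
begin

text \<open>Architecture vectors l :: nat => nat (layer widths l_0, l_1, ...).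
  Parameter vectors theta in R^d are functions nat => real, only indices 1..d matter.
  Vectors in R^n are functions nat => real, only indices 1..n matter.\<close>

definition dd :: "(nat \<Rightarrow> nat) \<Rightarrow> nat \<Rightarrow> nat" where
  "dd l k = (\<Sum>h=1..k. l h * (l (h - 1) + 1))"

definition wgt :: "(nat \<Rightarrow> nat) \<Rightarrow> (nat \<Rightarrow> real) \<Rightarrow> nat \<Rightarrow> nat \<Rightarrow> nat \<Rightarrow> real" where
  "wgt l \<theta> k i j = \<theta> ((i - 1) * l (k - 1) + j + dd l (k - 1))"

definition bias :: "(nat \<Rightarrow> nat) \<Rightarrow> (nat \<Rightarrow> real) \<Rightarrow> nat \<Rightarrow> nat \<Rightarrow> real" where
  "bias l \<theta> k i = \<theta> (l k * l (k - 1) + i + dd l (k - 1))"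

definition affine_layer :: "(nat \<Rightarrow> nat) \<Rightarrow> (nat \<Rightarrow> real) \<Rightarrow> nat \<Rightarrow> (nat \<Rightarrow> real) \<Rightarrow> (nat \<Rightarrow> real)" where
  "affine_layer l \<theta> k x = (\<lambda>i. bias l \<theta> k i + (\<Sum>j=1..l (k - 1). wgt l \<theta> k i j * x j))"

definition relu_vec :: "(nat \<Rightarrow> real) \<Rightarrow> (nat \<Rightarrow> real)" where
  "relu_vec x = (\<lambda>i. max (x i) 0)"

text \<open>realization l theta k x = N^{k,theta}_infinity(x) for k >= 1 (value at k = 0 is irrelevant).\<close>
fun realization :: "(nat \<Rightarrow> nat) \<Rightarrow> (nat \<Rightarrow> real) \<Rightarrow> nat \<Rightarrow> (nat \<Rightarrow> real) \<Rightarrow> (nat \<Rightarrow> real)" where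
  "realization l \<theta> 0 x = x"
| "realization l \<theta> (Suc 0) x = affine_layer l \<theta> 1 x"
| "realization l \<theta> (Suc (Suc k)) x =
     affine_layer l \<theta> (Suc (Suc k)) (relu_vec (realization l \<theta> (Suc k) x))"

definition risk :: "(nat \<Rightarrow> nat) \<Rightarrow> nat \<Rightarrow> (nat \<Rightarrow> real) measure \<Rightarrow> ((nat \<Rightarrow> real) \<Rightarrow> nat \<Rightarrow> real)
    \<Rightarrow> (nat \<Rightarrow> real) \<Rightarrow> real" where
  "risk l L M f \<theta> =
     integral\<^sup>L M (\<lambda>x. (\<Sum>i=1..l L. (realization l \<theta> L x i - f x i)\<^sup>2))"

definition alpha :: "(nat \<Rightarrow> nat) \<Rightarrow> nat \<Rightarrow> nat \<Rightarrow> nat \<Rightarrow> nat" where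
  "alpha l i j k = i * l (k - 1) + j + (\<Sum>h=1..k - 1. l h * (l (h - 1) + 1))"

end

theory Submission
  imports Defs
begin

text \<open>Both parameter vectors realize the constant function \<open>\<xi>\<close>: \<open>\<theta>\<close> switches on the first
  neuron of layer \<open>L - 1\<close> (bias 1) but reads it out with weight 0, \<open>\<phi>\<close> reads it out with
  weight 1 but leaves it switched off. Their midpoint has bias and weight \<open>1/2\<close>, so its first
  output is \<open>\<xi> 1 + 1/4\<close>. Since \<open>\<xi> 1\<close> is the mean of \<open>f\<^sub>1\<close>, the cross term integrates to
  zero and the risk grows by exactly \<open>(1/4)\<^sup>2\<close> times the total mass.\<close>

lemma alpha_dd: "alpha l i j k = i * l (k - 1) + j + dd l (k - 1)"
  by (simp add: alpha_def dd_def)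

lemma wgt_alpha: "wgt l \<theta> k i j = \<theta> (alpha l (i - 1) j k)"
  by (simp add: wgt_def alpha_dd)

lemma bias_alpha: "bias l \<theta> k i = \<theta> (alpha l (l k) i k)"
  by (simp add: bias_def alpha_dd)

lemma dd_Suc: "dd l (Suc k) = dd l k + l (Suc k) * (l k + 1)"
  by (simp add: dd_def)

lemma alpha_le_dd: "0 < k \<Longrightarrow> j \<le> l k \<Longrightarrow> alpha l (l k) j k \<le> dd l k"
  by (cases k) (simp_all add: alpha_dd dd_Suc)

lemma alpha_less_alpha:
  assumes "i < l k" "j \<le> l (k - 1)" "0 < j'"
  shows "alpha l i j k < alpha l (l k) j' k"
proof -
  have "i * l (k - 1) + j \<le> Suc i * l (k - 1)" using assms(2) by simp
  also have "\<dots> \<le> l k * l (k - 1)" using assms(1) by (intro mult_right_mono) auto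
  finally show ?thesis using assms(3) by (simp add: alpha_dd)
qed

lemma realization_Suc:
  "realization l \<theta> (Suc k) x =
     affine_layer l \<theta> (Suc k) (if k = 0 then x else relu_vec (realization l \<theta> k x))"
  by (cases k) simp_all

lemma realization_Suc_eq_bias:
  assumes "\<forall>j\<in>{1..l k}. wgt l \<theta> (Suc k) i j = 0"
  shows "realization l \<theta> (Suc k) x i = bias l \<theta> (Suc k) i"
  using assms by (simp add: realization_Suc affine_layer_def)

text \<open>The indices of the first bias of layer \<open>L - 1\<close>, of the weight \<open>\<mathfrak>w\<^sup>L\<^sub>1\<^sub>,\<^sub>1\<close>
  and of the biases of layer \<open>L\<close>.\<close>

definition top_support :: "(nat \<Rightarrow> nat) \<Rightarrow> nat \<Rightarrow> nat set" where
  "top_support l L =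
     (\<Union>k\<in>{1..l L}. {alpha l (l (L - 1)) 1 (L - 1), alpha l 0 1 L, alpha l (l L) k L})"

lemma first_weight_notin_top_support:
  assumes "2 \<le> L" "0 < l (L - 2)" "0 < l (L - 1)"
  shows "alpha l 0 1 (L - 1) \<in> {1..dd l L} - top_support l L"
proof -
  obtain K where "L = Suc (Suc K)" using assms(1) by (metis add_2_eq_Suc le_Suc_ex)
  then show ?thesis
    using assms by (auto simp: top_support_def alpha_dd dd_Suc)
qed

lemma top_support_gt_dd:
  assumes "j \<in> top_support l (Suc (Suc K))" "j \<noteq> alpha l (l (Suc K)) 1 (Suc K)"
  shows "dd l (Suc K) < j"
  using assms by (auto simp: top_support_def alpha_dd split: if_splits)

lemma realization_penultimate_sparse:
  assumes zero: "\<forall>j\<in>{1..dd l (Suc (Suc K))} - top_support l (Suc (Suc K)). \<theta> j = 0"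
    and j: "j \<in> {1..l (Suc K)}"
  shows "realization l \<theta> (Suc K) x j = (if j = 1 then \<theta> (alpha l (l (Suc K)) 1 (Suc K)) else 0)"
proof -
  have vanish: "\<theta> n = 0"
    if "0 < n" "n \<le> dd l (Suc K)" "n \<noteq> alpha l (l (Suc K)) 1 (Suc K)" for n
  proof -
    have "dd l (Suc K) \<le> dd l (Suc (Suc K))" by (simp add: dd_Suc)
    then show ?thesis using zero that top_support_gt_dd[of n l K] by force
  qed
  have "wgt l \<theta> (Suc K) j j' = 0" if j': "j' \<in> {1..l K}" for j'
  proof -
    have "alpha l (j - 1) j' (Suc K) < alpha l (l (Suc K)) 1 (Suc K)"
      using j j' by (intro alpha_less_alpha) auto
    moreover have "alpha l (l (Suc K)) 1 (Suc K) \<le> dd l (Suc K)"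
      using j by (intro alpha_le_dd) auto
    ultimately show ?thesis
      unfolding wgt_alpha using j' by (intro vanish) (auto simp: alpha_dd)
  qed
  then have "realization l \<theta> (Suc K) x j = \<theta> (alpha l (l (Suc K)) j (Suc K))"
    by (simp add: realization_Suc_eq_bias bias_alpha)
  moreover have "\<theta> (alpha l (l (Suc K)) j (Suc K)) = 0" if "j \<noteq> 1"
    using j that by (intro vanish alpha_le_dd) (auto simp: alpha_dd)
  ultimately show ?thesis by simp
qed

lemma wgt_last_layer_sparse:
  assumes width: "0 < l (Suc K)"
    and zero: "\<forall>j\<in>{1..dd l (Suc (Suc K))} - top_support l (Suc (Suc K)). \<theta> j = 0"
    and i: "i \<in> {1..l (Suc (Suc K))}" and j: "j \<in> {1..l (Suc K)}"
  shows "wgt l \<theta> (Suc (Suc K)) i j = (if i = 1 \<and> j = 1 then \<theta> (alpha l 0 1 (Suc (Suc K))) else 0)"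
proof (cases "i = 1 \<and> j = 1")
  case True
  then show ?thesis by (simp add: wgt_alpha)
next
  case False
  let ?w = "alpha l (i - 1) j (Suc (Suc K))"
  have "?w \<noteq> alpha l 0 1 (Suc (Suc K))"
  proof (cases "i = 1")
    case False
    then have "0 < (i - 1) * l (Suc K)" using i width by simp
    moreover have "1 \<le> j" using j by simp
    ultimately have "1 < (i - 1) * l (Suc K) + j" by linarith
    then show ?thesis by (simp add: alpha_dd)
  qed (use False in \<open>simp add: alpha_dd\<close>)
  moreover have less_out: "?w < alpha l (l (Suc (Suc K))) k (Suc (Suc K))" if "0 < k" for k
    using i j that by (intro alpha_less_alpha) auto
  moreover have "alpha l (l (Suc K)) 1 (Suc K) < ?w"
    using j alpha_le_dd[of "Suc K" 1 l] width by (simp add: alpha_dd)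
  moreover have "?w \<noteq> alpha l (l (Suc (Suc K))) k (Suc (Suc K))" if "0 < k" for k
    using less_out[OF that] by simp
  ultimately have "?w \<notin> top_support l (Suc (Suc K))"
    unfolding top_support_def by (simp add: Suc_le_eq)
  moreover have "?w \<le> dd l (Suc (Suc K))"
    using less_out[of i] alpha_le_dd[of "Suc (Suc K)" i l] i by simp
  moreover have "0 < ?w" using j by (simp add: alpha_dd)
  ultimately show ?thesis using zero False by (auto simp: wgt_alpha)
qed

lemma realization_sparse:
  assumes L: "2 \<le> L" and width: "0 < l (L - 1)"
    and zero: "\<forall>j\<in>{1..dd l L} - top_support l L. \<theta> j = 0"
    and i: "i \<in> {1..l L}"
  shows "realization l \<theta> L x i = \<theta> (alpha l (l L) i L)
           + (if i = 1 then \<theta> (alpha l 0 1 L) * max (\<theta> (alpha l (l (L - 1)) 1 (L - 1))) 0 else 0)"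
proof -
  obtain K where LK: "L = Suc (Suc K)" using L by (metis add_2_eq_Suc le_Suc_ex)
  let ?A = "\<theta> (alpha l (l (Suc K)) 1 (Suc K))" and ?B = "\<theta> (alpha l 0 1 (Suc (Suc K)))"
  have "realization l \<theta> L x i = \<theta> (alpha l (l L) i L)
      + (\<Sum>j=1..l (Suc K). (if i = 1 \<and> j = 1 then ?B else 0) * max (if j = 1 then ?A else 0) 0)"
    using realization_penultimate_sparse[OF zero[unfolded LK]] wgt_last_layer_sparse[OF _ zero[unfolded LK]]
      width i
    by (simp add: LK affine_layer_def relu_vec_def bias_alpha)
  also have "\<dots> = \<theta> (alpha l (l L) i L)
      + (\<Sum>j=1..l (Suc K). if j = 1 then (if i = 1 then ?B * max ?A 0 else 0) else 0)"
    by (intro arg_cong[where f = "\<lambda>s. _ + s"] sum.cong) auto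
  also have "\<dots> = \<theta> (alpha l (l L) i L) + (if i = 1 then ?B * max ?A 0 else 0)"
    using width by (simp add: LK)
  finally show ?thesis by (simp add: LK)
qed

lemma sum_power2_shift_first:
  fixes u v :: "nat \<Rightarrow> real"
  assumes "1 \<le> n"
  shows "(\<Sum>i=1..n. (u i + (if i = 1 then c else 0) - v i)\<^sup>2)
           = (\<Sum>i=1..n. (u i - v i)\<^sup>2) + 2 * c * (u 1 - v 1) + c\<^sup>2"
proof -
  have "(\<Sum>i=1..n. (u i + (if i = 1 then c else 0) - v i)\<^sup>2)
      = (\<Sum>i=1..n. (u i - v i)\<^sup>2 + (if i = 1 then 2 * c * (u 1 - v 1) + c\<^sup>2 else 0))"
    by (intro sum.cong) (auto simp: power2_eq_square algebra_simps)
  then show ?thesis using assms by (simp add: sum.distrib)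
qed

lemma integral_add_centered:
  fixes F g :: "'a \<Rightarrow> real"
  assumes "finite_measure M" "integrable M F" "integrable M g"
    and mean: "\<xi> * measure M (space M) = integral\<^sup>L M g"
  shows "integral\<^sup>L M (\<lambda>x. F x + 2 * c * (\<xi> - g x) + c\<^sup>2)
           = integral\<^sup>L M F + c\<^sup>2 * measure M (space M)"
proof -
  interpret finite_measure M by fact
  have "integral\<^sup>L M (\<lambda>x. \<xi> - g x) = 0"
    using assms(3) mean by (simp add: integral_diff mult.commute)
  then show ?thesis
    using assms(2,3) by (simp add: integral_add integral_diff)
qed

lemma risk_eq_of_constant_output:
  assumes "\<forall>x. \<forall>i\<in>{1..l L}. realization l \<theta> L x i = v i"
  shows "risk l L M f \<theta> = integral\<^sup>L M (\<lambda>x. \<Sum>i=1..l L. (v i - f x i)\<^sup>2)"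
  unfolding risk_def using assms by (intro Bochner_Integration.integral_cong sum.cong) auto

lemma risk_shift_first_output:
  assumes fin: "finite_measure M" and width: "1 \<le> l L"
    and \<theta>: "\<forall>x. \<forall>i\<in>{1..l L}. realization l \<theta> L x i = v i"
    and \<eta>: "\<forall>x. \<forall>i\<in>{1..l L}. realization l \<eta> L x i = v i + (if i = 1 then c else 0)"
    and int_\<theta>: "integrable M (\<lambda>x. \<Sum>i=1..l L. (realization l \<theta> L x i - f x i)\<^sup>2)"
    and int_\<eta>: "integrable M (\<lambda>x. \<Sum>i=1..l L. (realization l \<eta> L x i - f x i)\<^sup>2)"
    and mean: "v 1 * measure M (space M) = integral\<^sup>L M (\<lambda>x. f x 1)"
  shows "risk l L M f \<eta> = risk l L M f \<theta> + c\<^sup>2 * measure M (space M)"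
proof -
  define F where "F x = (\<Sum>i=1..l L. (v i - f x i)\<^sup>2)" for x
  have risk_\<theta>: "risk l L M f \<theta> = integral\<^sup>L M F"
    unfolding F_def using \<theta> by (rule risk_eq_of_constant_output)
  have F_\<theta>: "(\<Sum>i=1..l L. (realization l \<theta> L x i - f x i)\<^sup>2) = F x" for x
    unfolding F_def using \<theta> by simp
  have F_\<eta>: "(\<Sum>i=1..l L. (realization l \<eta> L x i - f x i)\<^sup>2) = F x + 2 * c * (v 1 - f x 1) + c\<^sup>2"
    for x
  proof -
    have "(\<Sum>i=1..l L. (realization l \<eta> L x i - f x i)\<^sup>2)
        = (\<Sum>i=1..l L. (v i + (if i = 1 then c else 0) - f x i)\<^sup>2)"
      using \<eta> by (intro sum.cong) auto
    also have "\<dots> = F x + 2 * c * (v 1 - f x 1) + c\<^sup>2"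
      unfolding F_def by (rule sum_power2_shift_first[OF width])
    finally show ?thesis .
  qed
  have risk_\<eta>: "risk l L M f \<eta> = integral\<^sup>L M (\<lambda>x. F x + 2 * c * (v 1 - f x 1) + c\<^sup>2)"
    unfolding risk_def F_\<eta> ..
  have int_F: "integrable M F" using int_\<theta> unfolding F_\<theta> .
  have int_shift: "integrable M (\<lambda>x. F x + 2 * c * (v 1 - f x 1) + c\<^sup>2)"
    using int_\<eta> unfolding F_\<eta> .
  show ?thesis
  proof (cases "c = 0")
    case True
    then show ?thesis by (simp add: risk_\<eta> risk_\<theta>)
  next
    case False
    interpret finite_measure M by (fact fin)
    txt \<open>\<open>f\<^sub>1\<close> is not assumed integrable; it is, as \<open>c \<noteq> 0\<close> and the two risk integrands differ
      by \<open>2c(v\<^sub>1 - f\<^sub>1) + c\<^sup>2\<close>.\<close>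
    have f_1: "(\<lambda>x. f x 1) = (\<lambda>x. v 1 + c / 2 - ((F x + 2 * c * (v 1 - f x 1) + c\<^sup>2) - F x) / (2 * c))"
      using False by (auto simp: field_simps power2_eq_square)
    have "integrable M (\<lambda>x. f x 1)"
      unfolding f_1 using int_shift int_F
      by (intro Bochner_Integration.integrable_diff integrable_divide_zero) auto
    then show ?thesis
      unfolding risk_\<eta> risk_\<theta> by (rule integral_add_centered[OF fin int_F _ mean])
  qed
qed

theorem corollary2p18:
  fixes L d :: nat and l :: "nat \<Rightarrow> nat" and a b :: real
    and M :: "(nat \<Rightarrow> real) measure" and f :: "(nat \<Rightarrow> real) \<Rightarrow> nat \<Rightarrow> real"
    and \<xi> \<theta> \<phi> :: "nat \<Rightarrow> real"
  assumes L_pos: "L \<ge> 1"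
    and l_pos: "\<forall>k. l k \<ge> 1"
    and ab: "a < b"
    and d_def: "d = (\<Sum>k=1..L. l k * (l (k - 1) + 1))"
    and M_sets: "sets M = sets (restrict_space (PiM {1..l 0} (\<lambda>_. lborel))
                                   (PiE {1..l 0} (\<lambda>_. {a..b})))"
    and M_fin: "emeasure M (space M) < \<infinity>"
    and f_meas: "\<forall>i\<in>{1..l L}. (\<lambda>x. f x i) \<in> borel_measurable M"
    and integr: "\<forall>\<eta>. integrable M (\<lambda>x. (\<Sum>i=1..l L. (realization l \<eta> L x i - f x i)\<^sup>2))"
    and nonzero: "real (L - 1) * measure M (space M) \<noteq> 0"
    and xi1: "\<xi> 1 = inverse (measure M (space M)) * integral\<^sup>L M (\<lambda>x. f x 1)"
    and cond: "\<forall>i\<in>{1..l L}. \<forall>j\<in>{1..d} - (\<Union>k\<in>{1..l L}.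
                  {alpha l (l (L - 1)) 1 (L - 1), alpha l 0 1 L, alpha l (l L) k L}).
               \<theta> (alpha l (l (L - 1)) 1 (L - 1)) = 1 \<and> \<phi> (alpha l 0 1 L) = 1 \<and>
               \<theta> (alpha l (l L) i L) = \<xi> i \<and> \<phi> (alpha l (l L) i L) = \<xi> i \<and>
               \<theta> (alpha l 0 1 L) = 0 \<and> \<phi> (alpha l (l (L - 1)) 1 (L - 1)) = 0 \<and>
               \<theta> j = 0 \<and> \<phi> j = 0"
  shows "risk l L M f (\<lambda>j. (\<theta> j + \<phi> j) / 2)
           = (risk l L M f \<theta> + risk l L M f \<phi>) / 2 + measure M (space M) / 16
         \<and> (risk l L M f \<theta> + risk l L M f \<phi>) / 2 + measure M (space M) / 16
           > (risk l L M f \<theta> + risk l L M f \<phi>) / 2"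
proof -
  let ?m = "measure M (space M)"
  define \<mu> where "\<mu> j = (\<theta> j + \<phi> j) / 2" for j
  have L: "2 \<le> L" using L_pos nonzero by (cases "L = 1") auto
  have m_pos: "0 < ?m" using nonzero by (simp add: order_less_le)
  have width: "0 < l k" for k using l_pos by (simp add: Suc_le_eq)
  have one: "1 \<in> {1..l L}" using l_pos by simp
  have "d = dd l L" using d_def by (simp add: dd_def)
  note params = cond[unfolded this top_support_def[symmetric], rule_format]
  \<comment> \<open>\<open>cond\<close> fixes the values on the support only relative to some index \<open>j\<close> outside it\<close>
  note j0 = first_weight_notin_top_support[OF L width width]
  have zero: "\<forall>j\<in>{1..dd l L} - top_support l L. \<theta> j = 0 \<and> \<phi> j = 0"
    using params[OF one] by blast
  have r_\<theta>: "\<forall>x. \<forall>i\<in>{1..l L}. realization l \<theta> L x i = \<xi> i"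
    and r_\<phi>: "\<forall>x. \<forall>i\<in>{1..l L}. realization l \<phi> L x i = \<xi> i"
    and r_\<mu>: "\<forall>x. \<forall>i\<in>{1..l L}. realization l \<mu> L x i = \<xi> i + (if i = 1 then 1 / 4 else 0)"
    using realization_sparse[OF L width] zero params[OF _ j0] by (simp_all add: \<mu>_def)
  have "risk l L M f \<phi> = risk l L M f \<theta>"
    using risk_eq_of_constant_output[OF r_\<theta>] risk_eq_of_constant_output[OF r_\<phi>] by simp
  moreover have "risk l L M f \<mu> = risk l L M f \<theta> + (1 / 4)\<^sup>2 * ?m"
  proof (rule risk_shift_first_output[OF _ _ r_\<theta> r_\<mu> integr[rule_format] integr[rule_format]])
    show "finite_measure M" using M_fin by (intro finite_measureI) auto
    show "\<xi> 1 * ?m = integral\<^sup>L M (\<lambda>x. f x 1)" using xi1 m_pos by simp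
  qed (use l_pos in blast)
  ultimately show ?thesis using m_pos by (simp add: \<mu>_def[abs_def] power2_eq_square)
qed

end
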